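(* $$\sum_{k=1}^\infty\frac{(15k^2-124k-40)8^k}{(4k+1)\binom{4k}k}=30-\frac32\pi.$$ *)

theory Defs
  imports "HOL-Analysis.Analysis"
begin

end

theory Submission
  imports Defs "HOL-Real_Asymp.Real_Asymp"
begin

(* With w(x) = 8x(1-x)^3 the Beta integral gives int_0^1 w^k = 8^k / ((4k+1) binom(4k,k)), so the
   k-th term is the integral of (15k^2-124k-40) w^k.  The tails of this power series in w have a
   closed form, hence the partial sums are the integrals of tail 1 w - tail (n+1) w, and the second
   part tends to 0 because w <= 27/32 on [0,1].  The rational function tail 1 w integrates to a
   rational part (Hermite reduction) plus 3/2 times the change of the argument of a quadratic
   polynomial, which decreases by pi over [0,1]. *)

lemma has_integral_power_mult_power_01:
  fixes m n :: nat
  shows "((\<lambda>t. t ^ m * (1 - t) ^ n) has_integral fact m * fact n / fact (m + n + 1)) {0..(1::real)}"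
proof (rule has_integral_spike_finite[of "{0, 1}"])
  have "Beta (real m + 1) (real n + 1) = fact m * fact n / fact (m + n + 1)"
    using Gamma_fact[where 'a = real, of m] Gamma_fact[where 'a = real, of n]
      Gamma_fact[where 'a = real, of "m + n + 1"]
    by (simp add: Beta_def add_ac del: fact_Suc)
  then show "((\<lambda>t. t powr (real m + 1 - 1) * (1 - t) powr (real n + 1 - 1))
          has_integral fact m * fact n / fact (m + n + 1)) {0..1}"
    using has_integral_Beta_real[of "real m + 1" "real n + 1"] by simp
qed (auto simp: powr_realpow)

lemma has_real_derivative_arctan_divide:
  fixes N M :: "real \<Rightarrow> real"
  assumes "(N has_real_derivative N') (at x)" "(M has_real_derivative M') (at x)" "M x \<noteq> 0"
  shows "((\<lambda>x. arctan (N x / M x)) has_real_derivative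
           (N' * M x - N x * M') / (N x ^ 2 + M x ^ 2)) (at x)"
proof -
  have "((\<lambda>x. arctan (N x / M x)) has_real_derivative
           inverse (1 + (N x / M x) ^ 2) * ((N' * M x - N x * M') / (M x * M x))) (at x)"
    using assms by (intro DERIV_chain2[OF DERIV_arctan] DERIV_divide)
  also have "inverse (1 + (N x / M x) ^ 2) * ((N' * M x - N x * M') / (M x * M x))
      = (N' * M x - N x * M') / (N x ^ 2 + M x ^ 2)"
  proof -
    have "1 + (N x / M x) ^ 2 = (N x ^ 2 + M x ^ 2) / M x ^ 2"
      using assms(3) by (simp add: field_simps)
    moreover have "N x ^ 2 + M x ^ 2 \<noteq> 0"
      using assms(3) by simp
    ultimately show ?thesis
      using assms(3) by (simp add: power2_eq_square)
  qed
  finally show ?thesis .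
qed

lemma arctan_1_plus_arctan_2_plus_arctan_3: "arctan 1 + arctan 2 + arctan 3 = pi"
proof -
  have "arctan (1/2) + arctan (1/3) = arctan ((1/2 + 1/3) / (1 - 1/2 * (1/3)))"
    by (rule arctan_add) auto
  then have "arctan (1/2) + arctan (1/3) = pi / 4"
    by simp
  then show ?thesis
    using arctan_inverse[of 2] arctan_inverse[of 3] by simp
qed

definition beta_weight :: "real \<Rightarrow> real" where
  "beta_weight x = 8 * x * (1 - x) ^ 3"

lemma has_integral_beta_weight_power:
  "((\<lambda>x. beta_weight x ^ k) has_integral 8 ^ k / ((4 * real k + 1) * real ((4 * k) choose k))) {0..1}"
proof -
  have "fact (4 * k) = fact k * fact (3 * k) * real ((4 * k) choose k)"
    using arg_cong[OF binomial_fact_lemma[of k "4 * k"], of real] by simp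
  then have "fact (k + 3 * k + 1) = (4 * real k + 1) * real ((4 * k) choose k) * (fact k * fact (3 * k))"
    by (simp add: algebra_simps)
  then have "fact k * fact (3 * k) / fact (k + 3 * k + 1) = 1 / ((4 * real k + 1) * real ((4 * k) choose k))"
    by simp
  then have "((\<lambda>x. 8 ^ k * (x ^ k * (1 - x) ^ (3 * k))) has_integral
               8 ^ k * (1 / ((4 * real k + 1) * real ((4 * k) choose k)))) {0..1}"
    using has_integral_mult_right[OF has_integral_power_mult_power_01[of k "3 * k"]] by simp
  then show ?thesis
    by (simp add: beta_weight_def power_mult_distrib power_mult mult.assoc)
qed

lemma beta_weight_bounds:
  assumes "0 \<le> x" "x \<le> 1"
  shows "0 \<le> beta_weight x" "beta_weight x \<le> 27 / 32"
proof -
  show "0 \<le> beta_weight x"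
    using assms by (simp add: beta_weight_def)
  have "27 / 32 - beta_weight x = 8 * (x - 1/4) ^ 2 * ((x - 5/4) ^ 2 + 1/8)"
    unfolding beta_weight_def by algebra
  moreover have "0 \<le> 8 * (x - 1/4) ^ 2 * ((x - 5/4) ^ 2 + 1/8)"
    by simp
  ultimately show "beta_weight x \<le> 27 / 32"
    by linarith
qed

(* For |y| < 1, tail k y is the tail sum of (15j^2 - 124j - 40) y^j over j >= k. *)
definition tail :: "nat \<Rightarrow> real \<Rightarrow> real" where
  "tail k y = y ^ k * (15 * (real k ^ 2 * (1 - y) ^ 2 + 2 * real k * y * (1 - y) + y * (1 + y))
      - 124 * (real k * (1 - y) ^ 2 + y * (1 - y)) - 40 * (1 - y) ^ 2) / (1 - y) ^ 3"

lemma tail_diff: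
  assumes "y \<noteq> 1"
  shows "tail k y - tail (Suc k) y = (15 * real k ^ 2 - 124 * real k - 40) * y ^ k"
  using assms unfolding tail_def by (simp add: field_simps) algebra

lemma tail_one: "tail 1 y = y * (-149 + 219 * y - 40 * y ^ 2) / (1 - y) ^ 3"
  unfolding tail_def by (simp add: field_simps) algebra

lemma abs_tail_le:
  assumes "0 \<le> y" "y \<le> c" "c < 1"
  shows "\<bar>tail k y\<bar> \<le> c ^ k * (15 * real k ^ 2 + 154 * real k + 194) / (1 - c) ^ 3"
proof -
  define K where "K = real k"
  have "0 \<le> K" by (simp add: K_def)
  have u: "0 \<le> (1 - y) ^ 2" "(1 - y) ^ 2 \<le> 1"
    using assms by (auto simp: power_le_one)
  have v: "0 \<le> y * (1 - y)" "y * (1 - y) \<le> 1" "0 \<le> y * (1 + y)" "y * (1 + y) \<le> 2"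
    using assms by (auto intro: mult_le_one order.trans[OF mult_mono[of y 1 "1 + y" 2]])
  have "K ^ 2 * (1 - y) ^ 2 \<le> K ^ 2" "K * (y * (1 - y)) \<le> K" "K * (1 - y) ^ 2 \<le> K"
    using u v \<open>0 \<le> K\<close> by (auto simp: mult_left_le)
  moreover have "0 \<le> K ^ 2 * (1 - y) ^ 2" "0 \<le> K * (y * (1 - y))" "0 \<le> K * (1 - y) ^ 2"
    using u v \<open>0 \<le> K\<close> by auto
  moreover have "15 * (K ^ 2 * (1 - y) ^ 2 + 2 * K * y * (1 - y) + y * (1 + y))
       - 124 * (K * (1 - y) ^ 2 + y * (1 - y)) - 40 * (1 - y) ^ 2
     = 15 * (K ^ 2 * (1 - y) ^ 2) + 30 * (K * (y * (1 - y))) + 15 * (y * (1 + y))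
       - 124 * (K * (1 - y) ^ 2) - 124 * (y * (1 - y)) - 40 * (1 - y) ^ 2"
    by (simp add: algebra_simps)
  ultimately have numerator:
    "\<bar>15 * (K ^ 2 * (1 - y) ^ 2 + 2 * K * y * (1 - y) + y * (1 + y))
       - 124 * (K * (1 - y) ^ 2 + y * (1 - y)) - 40 * (1 - y) ^ 2\<bar> \<le> 15 * K ^ 2 + 154 * K + 194"
    using u v unfolding abs_le_iff by linarith
  have "(1 - c) ^ 3 \<le> (1 - y) ^ 3"
    using assms by (intro power_mono) auto
  moreover have "y ^ k \<le> c ^ k"
    using assms by (intro power_mono) auto
  ultimately show ?thesis
    unfolding tail_def K_def[symmetric] abs_divide abs_mult
    using assms numerator by (intro frac_le mult_mono) auto
qed

lemma beta_weight_less_1: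
  assumes "0 \<le> x" "x \<le> 1"
  shows "beta_weight x < 1"
  using beta_weight_bounds[OF assms] by simp

lemma continuous_on_tail_beta_weight: "continuous_on {0..1} (\<lambda>x. tail k (beta_weight x))"
proof -
  have "continuous_on {0..1} beta_weight"
    unfolding beta_weight_def by (intro continuous_intros)
  moreover have "(1 - beta_weight x) ^ 3 \<noteq> 0" if "x \<in> {0..1}" for x
    using that beta_weight_less_1 by fastforce
  ultimately show ?thesis
    unfolding tail_def by (intro continuous_intros) auto
qed

lemma integral_tail_beta_weight_tendsto_0:
  "(\<lambda>k. integral {0..1} (\<lambda>x. tail k (beta_weight x))) \<longlonglongrightarrow> 0"
proof (rule Lim_null_comparison)
  let ?b = "\<lambda>k. (27 / 32) ^ k * (15 * real k ^ 2 + 154 * real k + 194) / (1 - 27 / 32) ^ 3"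
  have "\<bar>tail k (beta_weight x)\<bar> \<le> ?b k" if "x \<in> {0..1}" for x k
    using that by (intro abs_tail_le beta_weight_bounds) auto
  then have "norm (integral {0..1} (\<lambda>x. tail k (beta_weight x))) \<le> ?b k * (1 - 0)" for k
    by (intro integral_bound continuous_on_tail_beta_weight) auto
  then show "\<forall>\<^sub>F k in sequentially.
      norm (integral {0..1} (\<lambda>x. tail k (beta_weight x))) \<le> ?b k"
    by simp
  show "?b \<longlonglongrightarrow> 0"
    by real_asymp
qed

(* What remains of tail 1 (beta_weight x) after subtracting the derivative of hermite_part is
   -3(2x^2-2x+1)/(1 - beta_weight x), integrated by the arctangents below. *)
definition hermite_part :: "real \<Rightarrow> real" where
  "hermite_part x = (15/2 - 157 * x + 845 * x ^ 2 - 1638 * x ^ 3 + 1500 * x ^ 4 - 752 * x ^ 5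
      + 240 * x ^ 6 - 48 * x ^ 7) / (1 - beta_weight x) ^ 2 + 40 * x"

lemma has_real_derivative_hermite_part:
  assumes "beta_weight x \<noteq> 1"
  shows "(hermite_part has_real_derivative
           tail 1 (beta_weight x) + 3 * (2 * x ^ 2 - 2 * x + 1) / (1 - beta_weight x)) (at x)"
proof -
  define P where "P x = 15/2 - 157 * x + 845 * x ^ 2 - 1638 * x ^ 3 + 1500 * x ^ 4 - 752 * x ^ 5
      + 240 * x ^ 6 - 48 * x ^ 7" for x :: real
  define P' where "P' = -157 + 1690 * x - 4914 * x ^ 2 + 6000 * x ^ 3 - 3760 * x ^ 4
      + 1440 * x ^ 5 - 336 * x ^ 6"
  define W' where "W' = 8 - 48 * x + 72 * x ^ 2 - 32 * x ^ 3"
  define w where "w = beta_weight x"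
  define D where "D = 1 - w"
  have "D \<noteq> 0"
    using assms by (simp add: D_def w_def)
  have "(P has_real_derivative P') (at x)"
    unfolding P_def P'_def by (rule derivative_eq_intros refl)+ (simp add: algebra_simps)
  moreover have "(beta_weight has_real_derivative W') (at x)"
    unfolding beta_weight_def[abs_def] W'_def
    by (rule derivative_eq_intros refl)+ (simp add: algebra_simps power2_eq_square power3_eq_cube)
  ultimately have "(hermite_part has_real_derivative
      (P' * D ^ 2 - P x * (2 * D * - W')) / (D ^ 2 * D ^ 2) + 40) (at x)"
    unfolding hermite_part_def[abs_def] P_def[symmetric] D_def w_def
    by (auto intro!: derivative_eq_intros simp: assms)
  also have "(P' * D ^ 2 - P x * (2 * D * - W')) / (D ^ 2 * D ^ 2) + 40
      = (P' * D + 2 * P x * W' + 40 * D ^ 3) / D ^ 3"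
    using \<open>D \<noteq> 0\<close> by (simp add: field_simps power2_eq_square power3_eq_cube)
  also have "P' * D + 2 * P x * W' + 40 * D ^ 3
      = w * (-149 + 219 * w - 40 * w ^ 2) + 3 * (2 * x ^ 2 - 2 * x + 1) * D ^ 2"
    unfolding P_def P'_def W'_def D_def w_def beta_weight_def by algebra
  also have "(w * (-149 + 219 * w - 40 * w ^ 2) + 3 * (2 * x ^ 2 - 2 * x + 1) * D ^ 2) / D ^ 3
      = tail 1 w + 3 * (2 * x ^ 2 - 2 * x + 1) / D"
    using \<open>D \<noteq> 0\<close> unfolding tail_one D_def[symmetric]
    by (simp add: add_divide_distrib power2_eq_square power3_eq_cube)
  finally show ?thesis
    unfolding D_def w_def .
qed

(* Up to additive constants both arctangents are branches of the argument of
   q(x) = (4x^2-6x+1) + i(2x-1), the left one after rotating q by -1+2i; |q(x)|^2 = 2(1 - beta_weight x). *)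
lemma has_real_derivative_arctan_left:
  assumes "0 \<le> x" "x \<le> 1/2"
  shows "((\<lambda>x. arctan ((8 * x ^ 2 - 14 * x + 3) / (- 4 * x ^ 2 + 2 * x + 1))) has_real_derivative
           - 2 * (2 * x ^ 2 - 2 * x + 1) / (1 - beta_weight x)) (at x)"
proof -
  have "- 4 * x ^ 2 + 2 * x + 1 = 1 + 2 * x * (1 - 2 * x)"
    by algebra
  moreover have "0 \<le> 2 * x * (1 - 2 * x)"
    using assms by simp
  ultimately have "- 4 * x ^ 2 + 2 * x + 1 \<noteq> 0"
    by linarith
  then have "((\<lambda>x. arctan ((8 * x ^ 2 - 14 * x + 3) / (- 4 * x ^ 2 + 2 * x + 1))) has_real_derivative
      ((16 * x - 14) * (- 4 * x ^ 2 + 2 * x + 1) - (8 * x ^ 2 - 14 * x + 3) * (- 8 * x + 2))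
      / ((8 * x ^ 2 - 14 * x + 3) ^ 2 + (- 4 * x ^ 2 + 2 * x + 1) ^ 2)) (at x)"
    by (intro has_real_derivative_arctan_divide) (auto intro!: derivative_eq_intros)
  also have "(16 * x - 14) * (- 4 * x ^ 2 + 2 * x + 1) - (8 * x ^ 2 - 14 * x + 3) * (- 8 * x + 2)
      = 10 * (- 2 * (2 * x ^ 2 - 2 * x + 1))"
    by algebra
  also have "(8 * x ^ 2 - 14 * x + 3) ^ 2 + (- 4 * x ^ 2 + 2 * x + 1) ^ 2 = 10 * (1 - beta_weight x)"
    unfolding beta_weight_def by algebra
  finally show ?thesis
    by (simp only: mult_divide_mult_cancel_left_if) simp
qed

lemma has_real_derivative_arctan_right:
  assumes "1/2 \<le> x" "x \<le> 1"
  shows "((\<lambda>x. arctan ((2 * x - 1) / (4 * x ^ 2 - 6 * x + 1))) has_real_derivative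
           - 2 * (2 * x ^ 2 - 2 * x + 1) / (1 - beta_weight x)) (at x)"
proof -
  have "4 * x ^ 2 - 6 * x + 1 = (2 * x - 1) * (2 * x - 2) - 1"
    by algebra
  moreover have "(2 * x - 1) * (2 * x - 2) \<le> 0"
    using assms by (simp add: mult_nonneg_nonpos)
  ultimately have "4 * x ^ 2 - 6 * x + 1 \<noteq> 0"
    by linarith
  then have "((\<lambda>x. arctan ((2 * x - 1) / (4 * x ^ 2 - 6 * x + 1))) has_real_derivative
      (2 * (4 * x ^ 2 - 6 * x + 1) - (2 * x - 1) * (8 * x - 6))
      / ((2 * x - 1) ^ 2 + (4 * x ^ 2 - 6 * x + 1) ^ 2)) (at x)"
    by (intro has_real_derivative_arctan_divide) (auto intro!: derivative_eq_intros)
  also have "2 * (4 * x ^ 2 - 6 * x + 1) - (2 * x - 1) * (8 * x - 6) = 2 * (- 2 * (2 * x ^ 2 - 2 * x + 1))"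
    by algebra
  also have "(2 * x - 1) ^ 2 + (4 * x ^ 2 - 6 * x + 1) ^ 2 = 2 * (1 - beta_weight x)"
    unfolding beta_weight_def by algebra
  finally show ?thesis
    by (simp only: mult_divide_mult_cancel_left_if) simp
qed

lemma has_integral_tail_one_beta_weight_interval:
  fixes Q :: "real \<Rightarrow> real"
  assumes "a \<le> b" "{a..b} \<subseteq> {0..1}"
    and "\<And>x. x \<in> {a..b} \<Longrightarrow> ((\<lambda>x. arctan (Q x)) has_real_derivative
           - 2 * (2 * x ^ 2 - 2 * x + 1) / (1 - beta_weight x)) (at x)"
  shows "((\<lambda>x. tail 1 (beta_weight x)) has_integral
           hermite_part b + 3 / 2 * arctan (Q b) - (hermite_part a + 3 / 2 * arctan (Q a))) {a..b}"
proof (rule fundamental_theorem_of_calculus[OF \<open>a \<le> b\<close>])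
  fix x assume "x \<in> {a..b}"
  then have "beta_weight x \<noteq> 1"
    using assms(2) beta_weight_less_1 by fastforce
  have "((\<lambda>x. hermite_part x + 3 / 2 * arctan (Q x)) has_real_derivative
      tail 1 (beta_weight x) + 3 * (2 * x ^ 2 - 2 * x + 1) / (1 - beta_weight x)
      + 3 / 2 * (- 2 * (2 * x ^ 2 - 2 * x + 1) / (1 - beta_weight x))) (at x)"
    using \<open>x \<in> {a..b}\<close> \<open>beta_weight x \<noteq> 1\<close>
    by (intro DERIV_add DERIV_cmult has_real_derivative_hermite_part assms(3))
  moreover have "3 * (2 * x ^ 2 - 2 * x + 1) / (1 - beta_weight x)
      + 3 / 2 * (- 2 * (2 * x ^ 2 - 2 * x + 1) / (1 - beta_weight x)) = 0"
    using \<open>beta_weight x \<noteq> 1\<close> by (simp add: field_simps)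
  ultimately have "((\<lambda>x. hermite_part x + 3 / 2 * arctan (Q x)) has_real_derivative
      tail 1 (beta_weight x)) (at x)"
    by (simp add: add.assoc)
  then show "((\<lambda>x. hermite_part x + 3 / 2 * arctan (Q x)) has_vector_derivative
      tail 1 (beta_weight x)) (at x within {a..b})"
    by (simp add: has_real_derivative_iff_has_vector_derivative[symmetric] has_field_derivative_at_within)
qed

lemma has_integral_tail_one_beta_weight:
  "((\<lambda>x. tail 1 (beta_weight x)) has_integral 30 - 3 / 2 * pi) {0..1}"
proof -
  define L where "L x = (8 * x ^ 2 - 14 * x + 3) / (- 4 * x ^ 2 + 2 * x + 1)" for x :: real
  define R where "R x = (2 * x - 1) / (4 * x ^ 2 - 6 * x + 1)" for x :: real
  have "((\<lambda>x. tail 1 (beta_weight x)) has_integral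
      hermite_part (1/2) + 3 / 2 * arctan (L (1/2)) - (hermite_part 0 + 3 / 2 * arctan (L 0))) {0..1/2}"
    unfolding L_def
    by (intro has_integral_tail_one_beta_weight_interval has_real_derivative_arctan_left) auto
  moreover have "((\<lambda>x. tail 1 (beta_weight x)) has_integral
      hermite_part 1 + 3 / 2 * arctan (R 1) - (hermite_part (1/2) + 3 / 2 * arctan (R (1/2)))) {1/2..1}"
    unfolding R_def
    by (intro has_integral_tail_one_beta_weight_interval has_real_derivative_arctan_right) auto
  ultimately have "((\<lambda>x. tail 1 (beta_weight x)) has_integral
      hermite_part 1 - hermite_part 0 - 3 / 2 * (arctan (L 0) - arctan (L (1/2)) - arctan (R 1))) {0..1}"
    by (rule has_integral_combine[of 0 "1/2" 1, rotated 2, THEN has_integral_eq_rhs])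
      (auto simp: R_def field_simps)
  moreover have "hermite_part 1 - hermite_part 0 = 30"
    by (simp add: hermite_part_def beta_weight_def)
  moreover have "arctan (L 0) - arctan (L (1/2)) - arctan (R 1) = pi"
    using arctan_1_plus_arctan_2_plus_arctan_3 by (simp add: L_def R_def arctan_minus power2_eq_square)
  ultimately show ?thesis
    by simp
qed

lemma integral_tail_beta_weight_diff:
  "integral {0..1} (\<lambda>x. tail k (beta_weight x))
     - integral {0..1} (\<lambda>x. tail (Suc k) (beta_weight x))
   = (15 * real k ^ 2 - 124 * real k - 40) * 8 ^ k / ((4 * real k + 1) * real ((4 * k) choose k))"
proof -
  let ?I = "\<lambda>k. integral {0..1} (\<lambda>x. tail k (beta_weight x))"
  have "((\<lambda>x. tail k (beta_weight x) - tail (Suc k) (beta_weight x)) has_integral ?I k - ?I (Suc k))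
      {0..1}"
    by (intro has_integral_diff integrable_integral integrable_continuous_interval
        continuous_on_tail_beta_weight)
  moreover have "tail k (beta_weight x) - tail (Suc k) (beta_weight x)
      = (15 * real k ^ 2 - 124 * real k - 40) * beta_weight x ^ k" if "x \<in> {0..1}" for x
    using that beta_weight_less_1 by (intro tail_diff) fastforce
  ultimately have "((\<lambda>x. (15 * real k ^ 2 - 124 * real k - 40) * beta_weight x ^ k) has_integral
      ?I k - ?I (Suc k)) {0..1}"
    using has_integral_cong by (metis (no_types, lifting))
  then show ?thesis
    using has_integral_unique[OF _ has_integral_mult_right[OF has_integral_beta_weight_power]]
    by simp
qed

theorem lemma2p3:
  shows "(\<lambda>n. let k = n + 1 in
            (15 * real k ^ 2 - 124 * real k - 40) * 8 ^ k
              / ((4 * real k + 1) * real ((4 * k) choose k)))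
         sums (30 - 3 / 2 * pi)"
proof -
  define I where "I k = integral {0..1} (\<lambda>x. tail k (beta_weight x))" for k
  have "(\<lambda>n. I (Suc n)) \<longlonglongrightarrow> 0"
    unfolding I_def using integral_tail_beta_weight_tendsto_0 by (rule LIMSEQ_Suc)
  then have "(\<lambda>n. I (Suc n) - I (Suc (Suc n))) sums I 1"
    using telescope_sums' by fastforce
  moreover have "I 1 = 30 - 3 / 2 * pi"
    unfolding I_def using has_integral_tail_one_beta_weight by (rule integral_unique)
  ultimately show ?thesis
    using integral_tail_beta_weight_diff unfolding I_def by (simp add: Let_def)
qed

end
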